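(* Let $n\ge1$ and let $F$ and $G$ be permutations of $\mathbb{F}_{2^n}$ such that $F(x)=G(x)$ for all $x\in\mathbb{F}_{2^n}\setminus P$, for some nonempty subset $P\subseteq\mathbb{F}_{2^n}$. If $c\in\mathbb{F}_{2^n}$ and $c\neq 1$, then ${}_c\Delta_F\le {}_c\Delta_G+\#P$.
   Context: For $F:\mathbb{F}_{2^n}\to\mathbb{F}_{2^n}$ and $c\in\mathbb{F}_{2^n}$, ${}_cD_aF(x)=F(x+a)+cF(x)$ (characteristic $2$). For $a,b\in\mathbb{F}_{2^n}$, ${}_c\Delta_F(a,b)$ is the number of $x\in\mathbb{F}_{2^n}$ with ${}_cD_aF(x)=b$, and the $c$-differential uniformity is ${}_c\Delta_F=\max\{{}_c\Delta_F(a,b): a,b\in\mathbb{F}_{2^n},\ a\neq 0 \text{ if } c=1\}$. $\#P$ denotes the cardinality of $P$. *)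

theory Defs
  imports Main
begin

text \<open>The finite field F_{2^n} is modelled by a finite field type 'a with CARD('a) = 2^n
  (characteristic 2 follows). The c-differential derivative, in characteristic 2:\<close>

definition cDeriv :: "'a::field \<Rightarrow> 'a \<Rightarrow> ('a \<Rightarrow> 'a) \<Rightarrow> 'a \<Rightarrow> 'a" where
  "cDeriv c a F x = F (x + a) + c * F x"

definition cDelta :: "'a::{field,finite} \<Rightarrow> ('a \<Rightarrow> 'a) \<Rightarrow> 'a \<Rightarrow> 'a \<Rightarrow> nat" where
  "cDelta c F a b = card {x. cDeriv c a F x = b}"

definition cDU :: "'a::{field,finite} \<Rightarrow> ('a \<Rightarrow> 'a) \<Rightarrow> nat" where
  "cDU c F = Max {cDelta c F a b | a b. a \<noteq> 0 \<or> c \<noteq> 1}"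

end

theory Submission
  imports Defs "HOL-Number_Theory.Residues"
begin

text \<open>Outside the solutions x with x or x + a in P, the equations for F and G coincide. The map
  sending such a solution to whichever of x, x + a lies in P is injective: a clash forces both
  x and x + a to be solutions, and subtracting the two equations gives
  (1 - c) (F (x + a) - F x) = 0, so F (x + a) = F x, which is impossible for injective F and
  c \<noteq> 1 unless a = 0 (in characteristic 2, x is then also the translate of x + a).
  Hence F has at most card P more solutions than G, for every (a, b).\<close>

lemma CHAR_eq_2_if_card_power_of_2:
  assumes "card (UNIV :: 'a::{field,finite} set) = 2 ^ n"
  shows "CHAR('a) = 2"
proof -
  have "prime CHAR('a)"
    by (simp add: finite_imp_CHAR_pos prime_CHAR_semidom)
  moreover have "CHAR('a) dvd 2 ^ n"
    using CHAR_dvd_CARD[where 'a='a] assms by simp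
  ultimately have "CHAR('a) dvd 2"
    using prime_dvd_power by blast
  then have "CHAR('a) \<le> 2"
    by (simp add: dvd_imp_le)
  with \<open>prime CHAR('a)\<close> show ?thesis
    using prime_ge_2_nat le_antisym by blast
qed

lemma add_add_self_CHAR_2:
  assumes "CHAR('a::ring_1) = 2"
  shows "x + a + a = (x::'a)"
  using uminus_CHAR_2[OF assms, of a] by (metis add.assoc add.right_inverse add_0_right)

lemma cDeriv_translate_solutions_imp_eq_0:
  fixes F :: "'a::field \<Rightarrow> 'a"
  assumes "CHAR('a) = 2" and "inj F" and "c \<noteq> 1"
    and "cDeriv c a F x = b" and "cDeriv c a F (x + a) = b"
  shows "a = 0"
proof -
  have "F (x + a) + c * F x = F x + c * F (x + a)"
    using assms(4,5) add_add_self_CHAR_2[OF assms(1)] by (simp add: cDeriv_def)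
  then have "(1 - c) * (F (x + a) - F x) = 0"
    by (simp add: algebra_simps)
  with \<open>c \<noteq> 1\<close> have "F (x + a) = F x"
    by simp
  with \<open>inj F\<close> show "a = 0"
    by (simp add: inj_eq)
qed

lemma card_cDeriv_solutions_meeting_le:
  fixes F :: "'a::{field,finite} \<Rightarrow> 'a"
  assumes "CHAR('a) = 2" and "inj F" and "c \<noteq> 1"
  shows "card {x. cDeriv c a F x = b \<and> (x \<in> P \<or> x + a \<in> P)} \<le> card P"
    (is "card ?S \<le> _")
proof -
  define f where "f x = (if x \<in> P then x else x + a)" for x
  have eq_if_f_eq: "x = y" if "x \<in> ?S" "y \<in> ?S" "f x = f y" "x \<in> P" "y \<notin> P" for x y
  proof -
    from that have "x = y + a"
      by (simp add: f_def)
    with that have "a = 0"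
      using cDeriv_translate_solutions_imp_eq_0[OF assms, where x = y] by auto
    with \<open>x = y + a\<close> show "x = y"
      by simp
  qed
  have "inj_on f ?S"
  proof (rule inj_onI)
    fix x y assume xy: "x \<in> ?S" "y \<in> ?S" "f x = f y"
    consider "x \<in> P \<longleftrightarrow> y \<in> P" | "x \<in> P" "y \<notin> P" | "y \<in> P" "x \<notin> P"
      by blast
    then show "x = y"
    proof cases
      case 1
      with xy(3) show ?thesis
        by (cases "x \<in> P") (simp_all add: f_def)
    next
      case 2
      then show ?thesis
        using eq_if_f_eq[OF xy] by blast
    next
      case 3
      then show ?thesis
        using eq_if_f_eq[OF xy(2,1) xy(3)[symmetric]] by simp
    qed
  qed
  moreover have "f ` ?S \<subseteq> P"
    by (auto simp: f_def)
  ultimately show ?thesis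
    by (simp add: card_inj_on_le)
qed

lemma cDelta_le_cDelta_add_card:
  fixes F G :: "'a::{field,finite} \<Rightarrow> 'a"
  assumes "CHAR('a) = 2" and "inj F" and "c \<noteq> 1" and "\<forall>x. x \<notin> P \<longrightarrow> F x = G x"
  shows "cDelta c F a b \<le> cDelta c G a b + card P"
proof -
  let ?SF = "{x. cDeriv c a F x = b}"
  let ?Q = "{x. x \<in> P \<or> x + a \<in> P}"
  have "?SF \<inter> ?Q = {x. cDeriv c a F x = b \<and> (x \<in> P \<or> x + a \<in> P)}"
    by blast
  then have "card (?SF \<inter> ?Q) \<le> card P"
    using card_cDeriv_solutions_meeting_le[OF assms(1-3)] by simp
  moreover have "?SF - ?Q \<subseteq> {x. cDeriv c a G x = b}"
  proof
    fix x assume "x \<in> ?SF - ?Q"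
    then have "F x = G x" "F (x + a) = G (x + a)" and "cDeriv c a F x = b"
      using assms(4) by simp_all
    then show "x \<in> {x. cDeriv c a G x = b}"
      by (simp add: cDeriv_def)
  qed
  then have "card (?SF - ?Q) \<le> cDelta c G a b"
    by (simp add: cDelta_def card_mono)
  moreover have "cDelta c F a b = card (?SF \<inter> ?Q) + card (?SF - ?Q)"
    unfolding cDelta_def by (rule card_Int_Diff) simp
  ultimately show ?thesis
    by linarith
qed

lemma finite_cDelta_values: "finite {cDelta c F a b | a b. a \<noteq> 0 \<or> c \<noteq> 1}"
proof (rule finite_subset)
  show "{cDelta c F a b | a b. a \<noteq> 0 \<or> c \<noteq> 1} \<subseteq> range (\<lambda>(a, b). cDelta c F a b)"
  proof
    fix d assume "d \<in> {cDelta c F a b | a b. a \<noteq> 0 \<or> c \<noteq> 1}"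
    then obtain a b where "d = cDelta c F a b"
      by blast
    then show "d \<in> range (\<lambda>(a, b). cDelta c F a b)"
      using rangeI[of "\<lambda>(a, b). cDelta c F a b" "(a, b)"] by simp
  qed
qed simp

lemma cDelta_le_cDU: "a \<noteq> 0 \<or> c \<noteq> 1 \<Longrightarrow> cDelta c F a b \<le> cDU c F"
  unfolding cDU_def using finite_cDelta_values by (auto intro!: Max_ge)

lemma cDU_leI:
  assumes "\<And>a b. a \<noteq> 0 \<or> c \<noteq> 1 \<Longrightarrow> cDelta c F a b \<le> m"
  shows "cDU c F \<le> m"
  unfolding cDU_def
proof (rule Max.boundedI)
  show "finite {cDelta c F a b | a b. a \<noteq> 0 \<or> c \<noteq> 1}"
    by (rule finite_cDelta_values)
  have "cDelta c F 1 0 \<in> {cDelta c F a b | a b. a \<noteq> 0 \<or> c \<noteq> 1}"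
    by fastforce
  then show "{cDelta c F a b | a b. a \<noteq> 0 \<or> c \<noteq> 1} \<noteq> {}"
    by blast
  fix d assume "d \<in> {cDelta c F a b | a b. a \<noteq> 0 \<or> c \<noteq> 1}"
  then obtain a b where "d = cDelta c F a b" and "a \<noteq> 0 \<or> c \<noteq> 1"
    by blast
  with assms show "d \<le> m"
    by simp
qed

theorem mainTheorem2:
  fixes F G :: "'a::{field,finite} \<Rightarrow> 'a" and P :: "'a set" and c :: 'a and n :: nat
  assumes "n \<ge> 1" and "card (UNIV :: 'a set) = 2 ^ n"
    and "bij F" and "bij G"
    and "P \<noteq> {}"
    and "\<forall>x. x \<notin> P \<longrightarrow> F x = G x"
    and "c \<noteq> 1"
  shows "cDU c F \<le> cDU c G + card P"
proof (rule cDU_leI)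
  fix a b :: 'a
  assume "a \<noteq> 0 \<or> c \<noteq> 1"
  have "CHAR('a) = 2"
    using CHAR_eq_2_if_card_power_of_2 assms(2) .
  then have "cDelta c F a b \<le> cDelta c G a b + card P"
    using bij_is_inj[OF assms(3)] assms(7,6) by (rule cDelta_le_cDelta_add_card)
  also have "\<dots> \<le> cDU c G + card P"
    using cDelta_le_cDU[OF \<open>a \<noteq> 0 \<or> c \<noteq> 1\<close>] by simp
  finally show "cDelta c F a b \<le> cDU c G + card P" .
qed

end
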